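(* Let $\mathcal{D}=\mathcal{P}_{\mathcal{D}}\cup\mathcal{L}_{\mathcal{D}}$ be a non-primal dominating set of the incidence graph of an arbitrary projective plane $\Pi_q$ of order $q$. Let $k$ be the maximum number of points of $\mathcal{P}_{\mathcal{D}}$ on a line, and $c$ the maximum number of lines of $\mathcal{L}_{\mathcal{D}}$ through a point. If $|\mathcal{D}|+|\mathcal{P}_{\mathcal{D}}|\leq 4q-3$, then $k\leq|\mathcal{P}_{\mathcal{D}}|-q+1$. If $|\mathcal{D}|+|\mathcal{L}_{\mathcal{D}}|\leq 4q-3$, then $c\leq|\mathcal{L}_{\mathcal{D}}|-q+1$. Both conclusions hold if $|\mathcal{D}|\leq(5q-3)/2$.
   Context: A dominating set $\mathcal{D}=\mathcal{P}_{\mathcal{D}}\cup\mathcal{L}_{\mathcal{D}}$ of the incidence graph of $\Pi_q$ is a set of points and lines such that every point not in $\mathcal{P}_{\mathcal{D}}$ lies on a line of $\mathcal{L}_{\mathcal{D}}$ and every line not in $\mathcal{L}_{\mathcal{D}}$ contains a point of $\mathcal{P}_{\mathcal{D}}$. $\mathcal{D}$ is primal if it contains $q$ concurrent lines or $q$ collinear points; non-primal otherwise. *)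

theory Defs
  imports Main
begin

definition projective_plane ::
  "'p set \<Rightarrow> 'l set \<Rightarrow> ('p \<Rightarrow> 'l \<Rightarrow> bool) \<Rightarrow> nat \<Rightarrow> bool" where
  "projective_plane Pts Lns inc q \<longleftrightarrow>
     (\<forall>p\<in>Pts. \<forall>p'\<in>Pts. p \<noteq> p' \<longrightarrow> (\<exists>!l. l \<in> Lns \<and> inc p l \<and> inc p' l)) \<and>
     (\<forall>l\<in>Lns. \<forall>l'\<in>Lns. l \<noteq> l' \<longrightarrow> (\<exists>!p. p \<in> Pts \<and> inc p l \<and> inc p l')) \<and>
     (\<exists>Q. Q \<subseteq> Pts \<and> finite Q \<and> card Q = 4 \<and>
        (\<forall>l\<in>Lns. card {p\<in>Q. inc p l} \<le> 2)) \<and>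
     (\<forall>l\<in>Lns. finite {p\<in>Pts. inc p l} \<and> card {p\<in>Pts. inc p l} = q + 1)"

definition dominating_set ::
  "'p set \<Rightarrow> 'l set \<Rightarrow> ('p \<Rightarrow> 'l \<Rightarrow> bool) \<Rightarrow> 'p set \<Rightarrow> 'l set \<Rightarrow> bool" where
  "dominating_set Pts Lns inc PD LD \<longleftrightarrow>
     PD \<subseteq> Pts \<and> LD \<subseteq> Lns \<and>
     (\<forall>p\<in>Pts - PD. \<exists>l\<in>LD. inc p l) \<and>
     (\<forall>l\<in>Lns - LD. \<exists>p\<in>PD. inc p l)"

definition primal ::
  "'p set \<Rightarrow> 'l set \<Rightarrow> ('p \<Rightarrow> 'l \<Rightarrow> bool) \<Rightarrow> nat \<Rightarrow> 'p set \<Rightarrow> 'l set \<Rightarrow> bool" where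
  "primal Pts Lns inc q PD LD \<longleftrightarrow>
     (\<exists>p\<in>Pts. \<exists>S. S \<subseteq> LD \<and> card S = q \<and> (\<forall>l\<in>S. inc p l)) \<or>
     (\<exists>l\<in>Lns. \<exists>S. S \<subseteq> PD \<and> card S = q \<and> (\<forall>p\<in>S. inc p l))"

definition max_pts_on_line :: "'l set \<Rightarrow> ('p \<Rightarrow> 'l \<Rightarrow> bool) \<Rightarrow> 'p set \<Rightarrow> nat" where
  "max_pts_on_line Lns inc PD = Max ((\<lambda>l. card {p\<in>PD. inc p l}) ` Lns)"

definition max_lines_through_pt :: "'p set \<Rightarrow> ('p \<Rightarrow> 'l \<Rightarrow> bool) \<Rightarrow> 'l set \<Rightarrow> nat" where
  "max_lines_through_pt Pts inc LD = Max ((\<lambda>p. card {l\<in>LD. inc p l}) ` Pts)"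

end

theory Submission
  imports Defs
begin

text \<open>Suppose a line \<open>l\<close> carries \<open>k \<ge> |PD| - q + 2\<close> points of \<open>PD\<close>. Non-primality gives
  \<open>k \<le> q - 1\<close>, so \<open>l\<close> has \<open>a = q + 1 - k \<ge> 2\<close> points outside \<open>PD\<close>, while only
  \<open>m = |PD| - k \<le> q - 2\<close> points of \<open>PD\<close> lie off \<open>l\<close>. Through each point of \<open>l\<close> outside \<open>PD\<close>
  pass \<open>q\<close> further lines, at most \<open>m\<close> of which are dominated by points of \<open>PD\<close>; the others
  belong to \<open>LD\<close> and differ for different points, so
  \<open>|LD| \<ge> a (q - m) \<ge> 2a + 2(q - m) - 4 = 4q - 2|PD| - 2\<close>. Moreover the \<open>q\<^sup>2 - m\<close> points
  off \<open>l\<close> outside \<open>PD\<close> are covered by lines of \<open>LD\<close>, each covering at most \<open>q\<close> of them,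
  so \<open>|LD| \<ge> q\<close>. Both consequences contradict the size hypotheses, and the bound on \<open>c\<close>
  is the dual statement.\<close>

lemma card_filter_add_card_filter_not:
  "finite A \<Longrightarrow> card {x\<in>A. P x} + card {x\<in>A. \<not> P x} = card A"
  by (subst card_Un_disjoint[symmetric]) (auto intro: arg_cong[where f = card])

lemma two_mult_add_two_mult_le:
  fixes a b :: nat
  assumes "2 \<le> a" "2 \<le> b"
  shows "2 * a + 2 * b \<le> a * b + 4"
proof -
  have "0 \<le> (int a - 2) * (int b - 2)" using assms by simp
  then have "int (2 * a + 2 * b) \<le> int (a * b + 4)" by (simp add: algebra_simps)
  then show ?thesis by linarith
qed

text \<open>A self-dual axiomatization: the quadrangle axiom of \<open>projective_plane\<close> is replaced by
  its consequences that pencils have \<open>q + 1\<close> lines and that the plane is finite, so the dual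
  plane is again an instance.\<close>

locale proj_plane =
  fixes Pts :: "'p set" and Lns :: "'l set" and inc :: "'p \<Rightarrow> 'l \<Rightarrow> bool" and q :: nat
  assumes line_through_unique:
      "\<lbrakk>p \<in> Pts; p' \<in> Pts; p \<noteq> p'\<rbrakk> \<Longrightarrow> \<exists>!l. l \<in> Lns \<and> inc p l \<and> inc p' l"
    and meet_unique: "\<lbrakk>l \<in> Lns; l' \<in> Lns; l \<noteq> l'\<rbrakk> \<Longrightarrow> \<exists>!p. p \<in> Pts \<and> inc p l \<and> inc p l'"
    and finite_Pts: "finite Pts" and finite_Lns: "finite Lns"
    and Pts_nonempty: "Pts \<noteq> {}" and Lns_nonempty: "Lns \<noteq> {}"
    and card_line: "l \<in> Lns \<Longrightarrow> card {p\<in>Pts. inc p l} = q + 1"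
    and card_pencil: "p \<in> Pts \<Longrightarrow> card {l\<in>Lns. inc p l} = q + 1"

lemma projective_plane_line_through:
  "\<lbrakk>projective_plane Pts Lns inc q; a \<in> Pts; b \<in> Pts; a \<noteq> b\<rbrakk> \<Longrightarrow> \<exists>!l. l \<in> Lns \<and> inc a l \<and> inc b l"
  by (simp add: projective_plane_def)

lemma projective_plane_meet:
  "\<lbrakk>projective_plane Pts Lns inc q; l \<in> Lns; l' \<in> Lns; l \<noteq> l'\<rbrakk> \<Longrightarrow> \<exists>!p. p \<in> Pts \<and> inc p l \<and> inc p l'"
  by (simp add: projective_plane_def)

lemma projective_plane_join_exists:
  "\<lbrakk>projective_plane Pts Lns inc q; a \<in> Pts; b \<in> Pts; a \<noteq> b\<rbrakk> \<Longrightarrow> \<exists>l\<in>Lns. inc a l \<and> inc b l"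
  by (blast dest: projective_plane_line_through)

lemma projective_plane_join_unique:
  "\<lbrakk>projective_plane Pts Lns inc q; a \<in> Pts; b \<in> Pts; a \<noteq> b; l \<in> Lns; l' \<in> Lns;
    inc a l; inc b l; inc a l'; inc b l'\<rbrakk> \<Longrightarrow> l = l'"
  by (blast dest: projective_plane_line_through)

lemma projective_plane_meet_exists:
  "\<lbrakk>projective_plane Pts Lns inc q; l \<in> Lns; l' \<in> Lns; l \<noteq> l'\<rbrakk> \<Longrightarrow> \<exists>p\<in>Pts. inc p l \<and> inc p l'"
  by (blast dest: projective_plane_meet)

lemma projective_plane_card_line:
  "\<lbrakk>projective_plane Pts Lns inc q; l \<in> Lns\<rbrakk> \<Longrightarrow> card {p\<in>Pts. inc p l} = q + 1"
  by (simp add: projective_plane_def)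

lemma projective_plane_quadrangle:
  assumes "projective_plane Pts Lns inc q"
  obtains Q where "Q \<subseteq> Pts" "finite Q" "card Q = 4" "\<forall>l\<in>Lns. card {x\<in>Q. inc x l} \<le> 2"
  using assms unfolding projective_plane_def by (elim conjE exE) (rule that)

lemma projective_plane_exists_line_avoiding:
  assumes plane: "projective_plane Pts Lns inc q" and p: "p \<in> Pts"
  shows "\<exists>l\<in>Lns. \<not> inc p l"
proof -
  obtain Q where Q: "Q \<subseteq> Pts" "finite Q" "card Q = 4" "\<forall>l\<in>Lns. card {x\<in>Q. inc x l} \<le> 2"
    using projective_plane_quadrangle[OF plane] by blast
  have "3 \<le> card (Q - {p})" using Q by (simp add: card_Diff_singleton_if)
  then obtain T where T: "T \<subseteq> Q - {p}" "card T = 3" by (meson obtain_subset_with_card_n)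
  then obtain a b c where "T = {a, b, c}" "a \<noteq> b" "b \<noteq> c" "a \<noteq> c"
    by (auto simp: card_3_iff)
  with T have abc: "{a, b, c} \<subseteq> Q - {p}" "a \<noteq> b" "b \<noteq> c" "a \<noteq> c" by auto
  then have pts: "a \<in> Pts" "b \<in> Pts" "c \<in> Pts" "a \<noteq> p" using Q by auto
  obtain L1 where L1: "L1 \<in> Lns" "inc a L1" "inc b L1"
    using projective_plane_join_exists[OF plane pts(1,2) abc(2)] by blast
  obtain L2 where L2: "L2 \<in> Lns" "inc a L2" "inc c L2"
    using projective_plane_join_exists[OF plane pts(1,3) abc(4)] by blast
  show ?thesis
  proof (rule ccontr)
    assume "\<not> ?thesis"
    then have "inc p L1" "inc p L2" using L1 L2 by auto
    then have "L1 = L2"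
      using projective_plane_join_unique[OF plane p pts(1)] pts(4) L1 L2 by simp
    then have "{a, b, c} \<subseteq> {x\<in>Q. inc x L1}" using L1 L2 abc by auto
    then have "card {a, b, c} \<le> card {x\<in>Q. inc x L1}" using Q(2) by (intro card_mono) auto
    then have "3 \<le> card {x\<in>Q. inc x L1}" using abc by simp
    then show False using Q(4) L1 by fastforce
  qed
qed

text \<open>Joining \<open>p\<close> to the points of a line avoiding \<open>p\<close> is a bijection onto the pencil of \<open>p\<close>.\<close>

lemma projective_plane_card_pencil:
  assumes plane: "projective_plane Pts Lns inc q" and p: "p \<in> Pts"
  shows "card {l\<in>Lns. inc p l} = q + 1"
proof -
  obtain l0 where l0: "l0 \<in> Lns" "\<not> inc p l0"
    using projective_plane_exists_line_avoiding[OF plane p] by blast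
  define join where "join r = (SOME L. L \<in> Lns \<and> inc p L \<and> inc r L)" for r
  have join: "join r \<in> Lns \<and> inc p (join r) \<and> inc r (join r)" if "r \<in> Pts" "inc r l0" for r
  proof -
    have "r \<noteq> p" using that l0 by auto
    then have "\<exists>L. L \<in> Lns \<and> inc p L \<and> inc r L"
      using projective_plane_join_exists[OF plane p that(1)] by auto
    then show ?thesis unfolding join_def by (rule someI_ex)
  qed
  have "bij_betw join {r\<in>Pts. inc r l0} {L\<in>Lns. inc p L}"
  proof (rule bij_betw_imageI)
    show "inj_on join {r\<in>Pts. inc r l0}"
    proof
      fix r r' assume r: "r \<in> {r\<in>Pts. inc r l0}" and r': "r' \<in> {r\<in>Pts. inc r l0}"
        and eq: "join r = join r'"
      show "r = r'"
      proof (rule ccontr)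
        assume "r \<noteq> r'"
        moreover have "join r \<in> Lns" "inc r (join r)" using join[of r] r by simp_all
        moreover have "inc r' (join r)" using join[of r'] r' eq by simp
        ultimately have "join r = l0"
          using projective_plane_join_unique[OF plane, of r r' "join r" l0] r r' l0 by simp
        then show False using join[of r] r l0 by auto
      qed
    qed
    show "join ` {r\<in>Pts. inc r l0} = {L\<in>Lns. inc p L}"
    proof (intro equalityI subsetI)
      fix L assume L: "L \<in> {L\<in>Lns. inc p L}"
      then have "L \<noteq> l0" using l0 by auto
      then obtain r where r: "r \<in> Pts" "inc r L" "inc r l0"
        using projective_plane_meet_exists[OF plane _ l0(1)] L by blast
      then have "p \<noteq> r" using l0 by auto
      then have "join r = L"
        using projective_plane_join_unique[OF plane p r(1), of "join r" L] join[OF r(1,3)] r L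
        by simp
      then show "L \<in> join ` {r\<in>Pts. inc r l0}" using r by blast
    qed (use join in auto)
  qed
  moreover have "card {r\<in>Pts. inc r l0} = q + 1"
    using projective_plane_card_line[OF plane l0(1)] .
  ultimately show ?thesis by (simp add: bij_betw_same_card)
qed

lemma projective_plane_finite_line:
  "\<lbrakk>projective_plane Pts Lns inc q; l \<in> Lns\<rbrakk> \<Longrightarrow> finite {p\<in>Pts. inc p l}"
  by (simp add: projective_plane_def)

lemma projective_plane_finite_pencil:
  "\<lbrakk>projective_plane Pts Lns inc q; p \<in> Pts\<rbrakk> \<Longrightarrow> finite {l\<in>Lns. inc p l}"
  by (simp add: projective_plane_card_pencil card_ge_0_finite)

lemma projective_plane_finite_Pts:
  assumes plane: "projective_plane Pts Lns inc q" and p0: "p0 \<in> Pts"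
  shows "finite Pts"
proof (rule finite_subset)
  show "Pts \<subseteq> insert p0 (\<Union>L\<in>{L\<in>Lns. inc p0 L}. {r\<in>Pts. inc r L})"
  proof
    fix r assume r: "r \<in> Pts"
    show "r \<in> insert p0 (\<Union>L\<in>{L\<in>Lns. inc p0 L}. {r\<in>Pts. inc r L})"
    proof (cases "r = p0")
      case False
      then show ?thesis using projective_plane_join_exists[OF plane p0 r] r by blast
    qed simp
  qed
  show "finite (insert p0 (\<Union>L\<in>{L\<in>Lns. inc p0 L}. {r\<in>Pts. inc r L}))"
    using projective_plane_finite_line[OF plane] projective_plane_finite_pencil[OF plane p0] by simp
qed

lemma projective_plane_finite_Lns:
  assumes plane: "projective_plane Pts Lns inc q" and l0: "l0 \<in> Lns"
  shows "finite Lns"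
proof (rule finite_subset)
  show "Lns \<subseteq> insert l0 (\<Union>r\<in>{r\<in>Pts. inc r l0}. {L\<in>Lns. inc r L})"
  proof
    fix L assume L: "L \<in> Lns"
    show "L \<in> insert l0 (\<Union>r\<in>{r\<in>Pts. inc r l0}. {L\<in>Lns. inc r L})"
    proof (cases "L = l0")
      case False
      then show ?thesis using projective_plane_meet_exists[OF plane L l0] L by blast
    qed simp
  qed
  show "finite (insert l0 (\<Union>r\<in>{r\<in>Pts. inc r l0}. {L\<in>Lns. inc r L}))"
    using projective_plane_finite_line[OF plane l0] projective_plane_finite_pencil[OF plane] by simp
qed

lemma proj_plane_if_projective_plane:
  assumes plane: "projective_plane Pts Lns inc q"
  shows "proj_plane Pts Lns inc q"
proof
  show "\<exists>!l. l \<in> Lns \<and> inc a l \<and> inc b l" if "a \<in> Pts" "b \<in> Pts" "a \<noteq> b" for a b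
    by (rule projective_plane_line_through[OF plane that])
  show "\<exists>!p. p \<in> Pts \<and> inc p l \<and> inc p l'" if "l \<in> Lns" "l' \<in> Lns" "l \<noteq> l'" for l l'
    by (rule projective_plane_meet[OF plane that])
  show "card {p\<in>Pts. inc p l} = q + 1" if "l \<in> Lns" for l
    by (rule projective_plane_card_line[OF plane that])
  show "card {l\<in>Lns. inc p l} = q + 1" if "p \<in> Pts" for p
    by (rule projective_plane_card_pencil[OF plane that])
  obtain Q where Q: "Q \<subseteq> Pts" "card Q = 4" by (rule projective_plane_quadrangle[OF plane])
  then obtain p0 where p0: "p0 \<in> Pts" by (metis card.empty ex_in_conv subsetD zero_neq_numeral)
  obtain l0 where l0: "l0 \<in> Lns" using projective_plane_exists_line_avoiding[OF plane p0] by blast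
  show "Pts \<noteq> {}" "Lns \<noteq> {}" using p0 l0 by blast+
  show "finite Pts" by (rule projective_plane_finite_Pts[OF plane p0])
  show "finite Lns" by (rule projective_plane_finite_Lns[OF plane l0])
qed

context proj_plane
begin

lemma dual: "proj_plane Lns Pts (\<lambda>l p. inc p l) q"
  by (rule proj_plane.intro[OF meet_unique line_through_unique finite_Lns finite_Pts
        Lns_nonempty Pts_nonempty card_pencil card_line])

lemma lines_eq_if_two_common_points:
  "\<lbrakk>p \<in> Pts; p' \<in> Pts; p \<noteq> p'; l \<in> Lns; l' \<in> Lns; inc p l; inc p' l; inc p l'; inc p' l'\<rbrakk>
    \<Longrightarrow> l = l'"
  using line_through_unique by blast

lemma card_pencil_minus_line:
  assumes P: "P \<in> Pts" and l: "l \<in> Lns" "inc P l"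
  shows "card {L\<in>Lns. inc P L \<and> L \<noteq> l} = q"
proof -
  have "{L\<in>Lns. inc P L \<and> L \<noteq> l} = {L\<in>Lns. inc P L} - {l}" by auto
  then show ?thesis using card_pencil[OF P] l finite_Lns by simp
qed

lemma max_pts_on_line_attained:
  obtains l where "l \<in> Lns" "max_pts_on_line Lns inc PD = card {p\<in>PD. inc p l}"
proof -
  have "max_pts_on_line Lns inc PD \<in> (\<lambda>l. card {p\<in>PD. inc p l}) ` Lns"
    unfolding max_pts_on_line_def using finite_Lns Lns_nonempty by (intro Max_in) auto
  then show thesis using that by blast
qed

lemma card_collinear_lt_if_not_primal:
  assumes "\<not> primal Pts Lns inc q PD LD" "l \<in> Lns"
  shows "card {p\<in>PD. inc p l} < q"
proof (rule ccontr)
  assume "\<not> ?thesis"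
  then obtain S where "S \<subseteq> {p\<in>PD. inc p l}" "card S = q"
    by (meson not_less obtain_subset_with_card_n)
  then show False using assms unfolding primal_def by blast
qed

lemma card_points_on_off_line:
  assumes "L \<in> Lns" "l \<in> Lns" "L \<noteq> l"
  shows "card {r\<in>Pts. inc r L \<and> \<not> inc r l} = q"
proof -
  obtain r0 where r0: "r0 \<in> Pts" "inc r0 L" "inc r0 l" using meet_unique assms by blast
  have "{r\<in>Pts. inc r L \<and> \<not> inc r l} = {r\<in>Pts. inc r L} - {r0}"
    using lines_eq_if_two_common_points[of _ r0 L l] r0 assms by auto
  then show ?thesis using card_line[of L] r0 assms finite_Pts by simp
qed

text \<open>The \<open>q\<close> lines through a point \<open>P\<close> of \<open>l\<close>, other than \<open>l\<close>, partition the points off \<open>l\<close>.\<close>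

lemma card_points_off_line:
  assumes l: "l \<in> Lns"
  shows "card {r\<in>Pts. \<not> inc r l} = q * q"
proof -
  have "{p\<in>Pts. inc p l} \<noteq> {}" using card_line[OF l] by fastforce
  then obtain P where P: "P \<in> Pts" "inc P l" by blast
  define Ls where "Ls = {L\<in>Lns. inc P L \<and> L \<noteq> l}"
  have "{r\<in>Pts. \<not> inc r l} = (\<Union>L\<in>Ls. {r\<in>Pts. inc r L \<and> \<not> inc r l})"
  proof (intro equalityI subsetI)
    fix r assume r: "r \<in> {r\<in>Pts. \<not> inc r l}"
    then have "r \<noteq> P" using P by auto
    then obtain L where "L \<in> Lns" "inc P L" "inc r L" using line_through_unique P r by blast
    then show "r \<in> (\<Union>L\<in>Ls. {r\<in>Pts. inc r L \<and> \<not> inc r l})" using r unfolding Ls_def by auto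
  qed auto
  also have "card \<dots> = (\<Sum>L\<in>Ls. card {r\<in>Pts. inc r L \<and> \<not> inc r l})"
  proof (rule card_UN_disjoint)
    show "finite Ls" using finite_Lns unfolding Ls_def by simp
    show "\<forall>L\<in>Ls. finite {r\<in>Pts. inc r L \<and> \<not> inc r l}" using finite_Pts by simp
    show "\<forall>L\<in>Ls. \<forall>L'\<in>Ls. L \<noteq> L' \<longrightarrow>
        {r\<in>Pts. inc r L \<and> \<not> inc r l} \<inter> {r\<in>Pts. inc r L' \<and> \<not> inc r l} = {}"
      using lines_eq_if_two_common_points P unfolding Ls_def by blast
  qed
  also have "\<dots> = q * q"
    using card_points_on_off_line card_pencil_minus_line[OF P(1) l P(2)] l unfolding Ls_def by simp
  finally show ?thesis .
qed

context
  fixes PD :: "'p set" and LD :: "'l set"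
  assumes dom: "dominating_set Pts Lns inc PD LD"
begin

lemma PD_subset: "PD \<subseteq> Pts" and LD_subset: "LD \<subseteq> Lns"
  using dom unfolding dominating_set_def by auto

lemma finite_PD: "finite PD" and finite_LD: "finite LD"
  using PD_subset LD_subset finite_Pts finite_Lns finite_subset by auto

text \<open>Each line through \<open>P\<close> missing \<open>LD\<close> is dominated by a point of \<open>PD\<close> off \<open>l\<close>,
  and distinct such lines get distinct points because they already meet in \<open>P\<close>.\<close>

lemma card_undominated_lines_through_le:
  assumes P: "P \<in> Pts" "P \<notin> PD" and l: "l \<in> Lns" "inc P l"
  shows "card {L\<in>Lns - LD. inc P L \<and> L \<noteq> l} \<le> card {p\<in>PD. \<not> inc p l}"
proof -
  define T where "T = {L\<in>Lns - LD. inc P L \<and> L \<noteq> l}"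
  define g where "g L = (SOME r. r \<in> PD \<and> inc r L)" for L
  have g: "g L \<in> PD \<and> inc (g L) L" if "L \<in> T" for L
  proof -
    have "\<exists>r. r \<in> PD \<and> inc r L" using dom that unfolding T_def dominating_set_def by auto
    then show ?thesis unfolding g_def by (rule someI_ex)
  qed
  have g_ne_P: "g L \<noteq> P" if "L \<in> T" for L using g[OF that] P by auto
  have "inj_on g T"
  proof
    fix L L' assume L: "L \<in> T" and L': "L' \<in> T" and eq: "g L = g L'"
    have "g L \<in> Pts" "inc (g L) L" "inc (g L) L'"
      using g[OF L] g[OF L'] eq PD_subset by auto
    then show "L = L'"
      using lines_eq_if_two_common_points[of "g L" P L L'] g_ne_P[OF L] P L L'
      unfolding T_def by auto
  qed
  moreover have "g ` T \<subseteq> {p\<in>PD. \<not> inc p l}"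
  proof (rule image_subsetI)
    fix L assume L: "L \<in> T"
    have "\<not> inc (g L) l"
      using lines_eq_if_two_common_points[of "g L" P L l] g[OF L] g_ne_P[OF L] PD_subset P l L
      unfolding T_def by auto
    then show "g L \<in> {p\<in>PD. \<not> inc p l}" using g[OF L] by simp
  qed
  ultimately show ?thesis unfolding T_def[symmetric]
    using finite_PD by (intro card_inj_on_le) auto
qed

lemma card_dominating_lines_through_ge:
  assumes "P \<in> Pts" "P \<notin> PD" "l \<in> Lns" "inc P l"
  shows "q \<le> card {L\<in>LD. inc P L \<and> L \<noteq> l} + card {p\<in>PD. \<not> inc p l}"
proof -
  have "q = card {L\<in>Lns. inc P L \<and> L \<noteq> l}"
    using card_pencil_minus_line assms by simp
  also have "\<dots> = card {L\<in>LD. inc P L \<and> L \<noteq> l} + card {L\<in>Lns - LD. inc P L \<and> L \<noteq> l}"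
    using LD_subset finite_LD finite_Lns
    by (subst card_Un_disjoint[symmetric]) (auto intro: arg_cong[where f = card])
  also have "\<dots> \<le> card {L\<in>LD. inc P L \<and> L \<noteq> l} + card {p\<in>PD. \<not> inc p l}"
    using card_undominated_lines_through_le assms by simp
  finally show ?thesis .
qed

text \<open>Two points of \<open>l\<close> have no common line besides \<open>l\<close>, so the lines of \<open>LD\<close> counted
  at different points are distinct.\<close>

lemma card_undominated_on_line_mult_le:
  assumes l: "l \<in> Lns"
  shows "card {p\<in>Pts - PD. inc p l} * (q - card {p\<in>PD. \<not> inc p l}) \<le> card LD"
proof -
  define A where "A = {p\<in>Pts - PD. inc p l}"
  define S where "S P = {L\<in>LD. inc P L \<and> L \<noteq> l}" for P
  have "q - card {p\<in>PD. \<not> inc p l} \<le> card (S P)" if "P \<in> A" for P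
    using card_dominating_lines_through_ge[of P l] that l unfolding A_def S_def by auto
  then have "card A * (q - card {p\<in>PD. \<not> inc p l}) \<le> (\<Sum>P\<in>A. card (S P))"
    using sum_bounded_below[of A "q - card {p\<in>PD. \<not> inc p l}" "\<lambda>P. card (S P)"] by simp
  also have "\<dots> = card (\<Union>P\<in>A. S P)"
  proof (rule card_UN_disjoint[symmetric])
    show "finite A" using finite_Pts unfolding A_def by simp
    show "\<forall>P\<in>A. finite (S P)" using finite_LD unfolding S_def by simp
    show "\<forall>P\<in>A. \<forall>P'\<in>A. P \<noteq> P' \<longrightarrow> S P \<inter> S P' = {}"
      using lines_eq_if_two_common_points LD_subset l unfolding A_def S_def by blast
  qed
  also have "\<dots> \<le> card LD"
    using finite_LD unfolding S_def by (intro card_mono) auto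
  finally show ?thesis unfolding A_def .
qed

lemma q_le_card_dominating_lines:
  assumes l: "l \<in> Lns" and few: "card {p\<in>PD. \<not> inc p l} < q"
  shows "q \<le> card LD"
proof -
  have "q * q - card {p\<in>PD. \<not> inc p l} = card ({r\<in>Pts. \<not> inc r l} - {p\<in>PD. \<not> inc p l})"
    using card_points_off_line[OF l] PD_subset finite_Pts
    by (subst card_Diff_subset) (auto intro: finite_subset)
  also have "\<dots> \<le> card (\<Union>L\<in>LD. {r\<in>Pts. inc r L \<and> \<not> inc r l})"
  proof (rule card_mono)
    show "finite (\<Union>L\<in>LD. {r\<in>Pts. inc r L \<and> \<not> inc r l})" using finite_LD finite_Pts by simp
    show "{r\<in>Pts. \<not> inc r l} - {p\<in>PD. \<not> inc p l} \<subseteq> (\<Union>L\<in>LD. {r\<in>Pts. inc r L \<and> \<not> inc r l})"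
      using dom unfolding dominating_set_def by blast
  qed
  also have "\<dots> \<le> (\<Sum>L\<in>LD. card {r\<in>Pts. inc r L \<and> \<not> inc r l})"
    using finite_LD by (rule card_UN_le)
  also have "\<dots> \<le> card LD * q"
  proof (rule sum_bounded_above[of _ _ q, simplified])
    fix L assume "L \<in> LD"
    then show "card {r\<in>Pts. inc r L \<and> \<not> inc r l} \<le> q"
      using card_points_on_off_line[of L l] LD_subset l by (cases "L = l") auto
  qed
  finally have covered: "q * q - card {p\<in>PD. \<not> inc p l} \<le> card LD * q" .
  show ?thesis
  proof (rule ccontr)
    assume "\<not> ?thesis"
    then have "card LD * q + q \<le> q * q" using mult_le_mono1[of "card LD + 1" q q] by simp
    then show False using covered few by linarith
  qed
qed

lemma bounds_if_rich_line:
  assumes nonprimal: "\<not> primal Pts Lns inc q PD LD" and l: "l \<in> Lns"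
    and rich: "card PD + 2 \<le> card {p\<in>PD. inc p l} + q"
  shows "4 * q \<le> 2 * card PD + card LD + 2 \<and> q \<le> card LD"
proof -
  define k where "k = card {p\<in>PD. inc p l}"
  define m where "m = card {p\<in>PD. \<not> inc p l}"
  define a where "a = card {p\<in>Pts - PD. inc p l}"
  have km: "k + m = card PD"
    unfolding k_def m_def using finite_PD by (rule card_filter_add_card_filter_not)
  have "{p\<in>Pts. inc p l} = {p\<in>PD. inc p l} \<union> {p\<in>Pts - PD. inc p l}" using PD_subset by auto
  also have "card \<dots> = k + a"
    unfolding k_def a_def using finite_Pts finite_PD by (intro card_Un_disjoint) auto
  finally have ak: "a + k = q + 1" using card_line[OF l] by simp
  have "k < q" unfolding k_def using card_collinear_lt_if_not_primal[OF nonprimal l] .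
  then have "2 \<le> a" "2 \<le> q - m" using ak km rich unfolding k_def by linarith+
  then have "2 * a + 2 * (q - m) \<le> a * (q - m) + 4" by (rule two_mult_add_two_mult_le)
  moreover have "a * (q - m) \<le> card LD"
    unfolding a_def m_def using card_undominated_on_line_mult_le[OF l] .
  moreover have "q \<le> card LD"
    using q_le_card_dominating_lines[OF l] \<open>2 \<le> q - m\<close> unfolding m_def by linarith
  ultimately show ?thesis using ak km by linarith
qed

lemma bounds_if_max_pts_on_line_large:
  assumes "\<not> primal Pts Lns inc q PD LD" "card PD + 2 \<le> max_pts_on_line Lns inc PD + q"
  shows "4 * q \<le> 2 * card PD + card LD + 2 \<and> q \<le> card LD"
  using bounds_if_rich_line assms by (metis max_pts_on_line_attained)

end

end

lemma dominating_set_swap: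
  "dominating_set Lns Pts (\<lambda>l p. inc p l) LD PD \<longleftrightarrow> dominating_set Pts Lns inc PD LD"
  unfolding dominating_set_def by blast

lemma primal_swap: "primal Lns Pts (\<lambda>l p. inc p l) q LD PD \<longleftrightarrow> primal Pts Lns inc q PD LD"
  unfolding primal_def by blast

lemma max_lines_through_pt_eq_swap:
  "max_lines_through_pt Pts inc LD = max_pts_on_line Pts (\<lambda>l p. inc p l) LD"
  unfolding max_lines_through_pt_def max_pts_on_line_def ..

lemma bound_if_card_sum_small:
  fixes a b m q :: nat
  assumes large: "int a - int q + 1 < int m \<Longrightarrow> 4 * q \<le> 2 * a + b + 2 \<and> q \<le> b"
  shows "int (a + b) + int a \<le> 4 * int q - 3 \<Longrightarrow> int m \<le> int a - int q + 1"
    and "2 * int (a + b) \<le> 5 * int q - 3 \<Longrightarrow> int m \<le> int a - int q + 1"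
proof -
  show "int m \<le> int a - int q + 1" if "int (a + b) + int a \<le> 4 * int q - 3"
  proof (rule ccontr)
    assume "\<not> ?thesis"
    then have "4 * q \<le> 2 * a + b + 2" "q \<le> b" using large by simp_all
    with that show False unfolding of_nat_add distrib_left by linarith
  qed
  show "int m \<le> int a - int q + 1" if "2 * int (a + b) \<le> 5 * int q - 3"
  proof (rule ccontr)
    assume "\<not> ?thesis"
    then have "4 * q \<le> 2 * a + b + 2" "q \<le> b" using large by simp_all
    with that show False unfolding of_nat_add distrib_left by linarith
  qed
qed

theorem proposition3:
  fixes Pts :: "'p set" and Lns :: "'l set" and inc :: "'p \<Rightarrow> 'l \<Rightarrow> bool"
    and q :: nat and PD :: "'p set" and LD :: "'l set"
  assumes plane: "projective_plane Pts Lns inc q"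
    and dom: "dominating_set Pts Lns inc PD LD"
    and nonprimal: "\<not> primal Pts Lns inc q PD LD"
  defines "k \<equiv> max_pts_on_line Lns inc PD"
    and "c \<equiv> max_lines_through_pt Pts inc LD"
    and "D \<equiv> card PD + card LD"
  shows "(int D + int (card PD) \<le> 4 * int q - 3 \<longrightarrow> int k \<le> int (card PD) - int q + 1) \<and>
         (int D + int (card LD) \<le> 4 * int q - 3 \<longrightarrow> int c \<le> int (card LD) - int q + 1) \<and>
         (2 * int D \<le> 5 * int q - 3 \<longrightarrow>
            int k \<le> int (card PD) - int q + 1 \<and> int c \<le> int (card LD) - int q + 1)"
proof -
  interpret proj_plane Pts Lns inc q by (rule proj_plane_if_projective_plane[OF plane])
  interpret swap: proj_plane Lns Pts "\<lambda>l p. inc p l" q by (rule dual)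
  have "4 * q \<le> 2 * card PD + card LD + 2 \<and> q \<le> card LD"
    if "int (card PD) - int q + 1 < int k"
    using that unfolding k_def by (intro bounds_if_max_pts_on_line_large[OF dom nonprimal]) linarith
  note k_bounds = bound_if_card_sum_small[OF this]
  have "4 * q \<le> 2 * card LD + card PD + 2 \<and> q \<le> card PD"
    if "int (card LD) - int q + 1 < int c"
    using that unfolding c_def max_lines_through_pt_eq_swap
    by (intro swap.bounds_if_max_pts_on_line_large dominating_set_swap[THEN iffD2, OF dom])
      (use nonprimal primal_swap in blast, linarith)
  note c_bounds = bound_if_card_sum_small[OF this]
  have "card LD + card PD = D" unfolding D_def by simp
  then show ?thesis
    using k_bounds c_bounds unfolding D_def[symmetric] by blast
qed

end
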